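(* Let $N_E$ be the number of edges of the random intersection graph $\mathcal G(n,m,p)$, $n,m\ge3$, $p\in(0,1)$, and $\hat p=1-(1-p^2)^m$. Then $$\operatorname{Var}[N_E]=\binom n2\hat p(1-\hat p)+6\binom n3\Big[(1-2p^2+p^3)^m-(1-\hat p)^2\Big],$$ and $$\operatorname{Var}[N_E]\asymp n^2\hat p(1-\hat p)+n^3(1-2p^2+p^3)^m\big[1\wedge(mp^3)\big].$$ In particular, if $mp^3\le1$, then $\operatorname{Var}[N_E]\asymp n^2\hat p(1-\hat p)+n^3mp^3(1-\hat p)^2$.
   Context: Random intersection graph $\mathcal G(n,m,p)$: vertex set $\{v_1,\ldots,v_n\}$, attribute set $\{a_1,\ldots,a_m\}$; each vertex chooses each attribute independently with probability $p$, and two vertices are adjacent iff they chose at least one common attribute. Notation: $a\asymp b$ means $a,b>0$ and $c\,b\le a\le C\,b$ for positive constants $c,C$ not depending on $n,m,p$. *)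

theory Defs
  imports "HOL-Probability.Probability"
begin

text \<open>Random intersection graph G(n,m,p): vertices 0..<n, attributes 0..<m.
  An outcome is the indicator w (i,a) of "vertex i chose attribute a"; these are
  independent Bernoulli(p) variables.\<close>

definition rig :: "nat \<Rightarrow> nat \<Rightarrow> real \<Rightarrow> (nat \<times> nat \<Rightarrow> bool) pmf" where
  "rig n m p = Pi_pmf ({..<n} \<times> {..<m}) False (\<lambda>_. bernoulli_pmf p)"

definition rig_adj :: "nat \<Rightarrow> (nat \<times> nat \<Rightarrow> bool) \<Rightarrow> nat \<Rightarrow> nat \<Rightarrow> bool" where
  "rig_adj m w i j = (\<exists>a<m. w (i, a) \<and> w (j, a))"

definition num_edges :: "nat \<Rightarrow> nat \<Rightarrow> (nat \<times> nat \<Rightarrow> bool) \<Rightarrow> nat" where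
  "num_edges n m w = card {(i, j). i < j \<and> j < n \<and> rig_adj m w i j}"

definition var_edges :: "nat \<Rightarrow> nat \<Rightarrow> real \<Rightarrow> real" where
  "var_edges n m p = measure_pmf.variance (rig n m p) (\<lambda>w. real (num_edges n m w))"

definition p_hat :: "nat \<Rightarrow> real \<Rightarrow> real" where
  "p_hat m p = 1 - (1 - p^2)^m"

end

theory Submission
  imports Defs
begin

text \<open>
  Let Y_e be the indicator that the vertex pair e is not an edge, so that
  N_E = C(n,2) - (sum over e of Y_e) and Var N_E is the sum of Cov(Y_e, Y_f) over all pairs (e, f).
  The attributes are independent columns, and one attribute joins neither e nor f with probability
  1 - 2p^2 + p^|e u f|; hence E[Y_e Y_f] = (1 - 2p^2 + p^|e u f|)^m. Disjoint pairs are therefore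
  uncorrelated, which leaves the C(n,2) diagonal terms and the C(n,2) * 2(n-2) = 6 C(n,3) ordered
  pairs sharing one vertex. For the order of magnitude write (1 - p^2)^2 = (1 - 2p^2 + p^3)(1 - x)
  with x of order p^3: the covariance of two pairs sharing a vertex is then
  (1 - 2p^2 + p^3)^m (1 - (1 - x)^m), and 1 - (1 - x)^m lies between min(1, mx)/2 and min(1, mx)
  by Bernoulli's inequality.
\<close>

section \<open>Products of Bernoulli columns\<close>

lemma Pi_pmf_Times:
  assumes "finite A" "finite B"
  shows "Pi_pmf (A \<times> B) d q =
    map_pmf (\<lambda>F (x, y). F y x) (Pi_pmf B (\<lambda>_. d) (\<lambda>y. Pi_pmf A d (\<lambda>x. q (x, y))))"
proof (rule pmf_eqI)
  fix w :: "'a \<times> 'b \<Rightarrow> 'c"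
  let ?uncurry = "\<lambda>F (x, y). F y x" and ?cols = "Pi_pmf B (\<lambda>_. d) (\<lambda>y. Pi_pmf A d (\<lambda>x. q (x, y)))"
  have "inj ?uncurry"
    by (auto simp: inj_def fun_eq_iff)
  then have "pmf (map_pmf ?uncurry ?cols) (?uncurry (\<lambda>y x. w (x, y))) = pmf ?cols (\<lambda>y x. w (x, y))"
    by (rule pmf_map_inj')
  then have "pmf (map_pmf ?uncurry ?cols) w = pmf ?cols (\<lambda>y x. w (x, y))"
    by (simp add: case_prod_beta')
  also have "\<dots> = pmf (Pi_pmf (A \<times> B) d q) w"
  proof (cases "\<forall>z. z \<notin> A \<times> B \<longrightarrow> w z = d")
    case True
    then have "pmf ?cols (\<lambda>y x. w (x, y)) = (\<Prod>y\<in>B. \<Prod>x\<in>A. pmf (q (x, y)) (w (x, y)))"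
      using assms by (auto simp: pmf_Pi' intro!: prod.cong)
    also have "\<dots> = (\<Prod>z\<in>A \<times> B. pmf (q z) (w z))"
      by (subst prod.swap) (simp add: prod.cartesian_product)
    also have "\<dots> = pmf (Pi_pmf (A \<times> B) d q) w"
      using True assms by (subst pmf_Pi') auto
    finally show ?thesis .
  next
    case False
    then obtain x y where "(x, y) \<notin> A \<times> B" "w (x, y) \<noteq> d"
      by auto
    then have "pmf (Pi_pmf (A \<times> B) d q) w = 0"
      using assms by (intro pmf_Pi_outside) auto
    moreover have "pmf ?cols (\<lambda>y x. w (x, y)) = 0"
    proof (cases "y \<in> B")
      case True
      with \<open>(x, y) \<notin> A \<times> B\<close> \<open>w (x, y) \<noteq> d\<close> have "pmf (Pi_pmf A d (\<lambda>x. q (x, y))) (\<lambda>x. w (x, y)) = 0"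
        using assms by (intro pmf_Pi_outside) auto
      with True show ?thesis
        using assms by (subst pmf_Pi) auto
    next
      case False
      with \<open>w (x, y) \<noteq> d\<close> show ?thesis
        using assms by (intro pmf_Pi_outside) (auto simp: fun_eq_iff)
    qed
    ultimately show ?thesis
      by simp
  qed
  finally show "pmf (Pi_pmf (A \<times> B) d q) w = pmf (map_pmf ?uncurry ?cols) w" ..
qed

lemma expectation_prod_columns_Pi_pmf:
  fixes h :: "'b \<Rightarrow> ('a \<Rightarrow> 'c) \<Rightarrow> real"
  assumes "finite A" "finite B"
    and "\<And>y. y \<in> B \<Longrightarrow> integrable (measure_pmf (Pi_pmf A d (\<lambda>x. q (x, y)))) (h y)"
    and "\<And>y c. y \<in> B \<Longrightarrow> 0 \<le> h y c"
  shows "measure_pmf.expectation (Pi_pmf (A \<times> B) d q) (\<lambda>w. \<Prod>y\<in>B. h y (\<lambda>x. w (x, y)))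
       = (\<Prod>y\<in>B. measure_pmf.expectation (Pi_pmf A d (\<lambda>x. q (x, y))) (h y))"
proof -
  have "measure_pmf.expectation (Pi_pmf (A \<times> B) d q) (\<lambda>w. \<Prod>y\<in>B. h y (\<lambda>x. w (x, y)))
     = measure_pmf.expectation (Pi_pmf B (\<lambda>_. d) (\<lambda>y. Pi_pmf A d (\<lambda>x. q (x, y))))
         (\<lambda>F. \<Prod>y\<in>B. h y (F y))"
    by (simp add: Pi_pmf_Times assms)
  also have "\<dots> = (\<Prod>y\<in>B. measure_pmf.expectation (Pi_pmf A d (\<lambda>x. q (x, y))) (h y))"
    by (rule expectation_prod_Pi_pmf) (use assms in auto)
  finally show ?thesis .
qed

lemma prob_Pi_bernoulli_all_True:
  assumes "finite A" "S \<subseteq> A" "0 \<le> p" "p \<le> 1"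
  shows "measure_pmf.prob (Pi_pmf A d (\<lambda>_. bernoulli_pmf p)) {c. \<forall>x\<in>S. c x} = p ^ card S"
proof -
  have "{c. \<forall>x\<in>S. c x} = Pi A (\<lambda>x. if x \<in> S then {True} else UNIV)"
    using assms(2) by (auto simp: Pi_def)
  then have "measure_pmf.prob (Pi_pmf A d (\<lambda>_. bernoulli_pmf p)) {c. \<forall>x\<in>S. c x}
      = (\<Prod>x\<in>A. if x \<in> S then p else 1)"
    using assms by (simp add: measure_Pi_pmf_Pi measure_pmf_single if_distrib cong: if_cong)
  also have "\<dots> = p ^ card S"
    using assms by (simp add: prod.If_cases Int_absorb1 Int_commute)
  finally show ?thesis .
qed

lemma expectation_Pi_bernoulli_not_both:
  assumes "finite A" "{i, j, k, l} \<subseteq> A" "i \<noteq> j" "k \<noteq> l" "0 \<le> p" "p \<le> 1"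
  shows "measure_pmf.expectation (Pi_pmf A d (\<lambda>_. bernoulli_pmf p))
      (\<lambda>c. (if c i \<and> c j then 0 else 1) * (if c k \<and> c l then 0 else 1))
    = 1 - 2 * p\<^sup>2 + p ^ card {i, j, k, l}"
proof -
  let ?M = "Pi_pmf A d (\<lambda>_. bernoulli_pmf p)" and ?E = "\<lambda>S. {c. \<forall>x\<in>S. c x}"
  have integrable_indicator: "integrable (measure_pmf ?M) (indicator E :: _ \<Rightarrow> real)" for E
    by (rule measure_pmf.integrable_const_bound[where B = 1]) auto
  have prob: "measure_pmf.prob ?M (?E S) = p ^ card S" if "S \<subseteq> A" for S
    using prob_Pi_bernoulli_all_True[OF assms(1) that assms(5,6)] .
  have "(\<lambda>c. (if c i \<and> c j then 0 else 1) * (if c k \<and> c l then 0 else 1))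
      = (\<lambda>c. 1 - indicator (?E {i, j}) c - indicator (?E {k, l}) c + indicator (?E {i, j, k, l}) c :: real)"
    by (auto simp: indicator_def)
  then have "measure_pmf.expectation ?M (\<lambda>c. (if c i \<and> c j then 0 else 1) * (if c k \<and> c l then 0 else 1))
      = 1 - measure_pmf.prob ?M (?E {i, j}) - measure_pmf.prob ?M (?E {k, l})
          + measure_pmf.prob ?M (?E {i, j, k, l})"
    using integrable_indicator by simp
  also have "\<dots> = 1 - 2 * p\<^sup>2 + p ^ card {i, j, k, l}"
    using assms prob[of "{i, j}"] prob[of "{k, l}"] prob[of "{i, j, k, l}"]
    by (simp add: power2_eq_square)
  finally show ?thesis .
qed

lemma (in prob_space) variance_const_minus:
  fixes X :: "'a \<Rightarrow> real"
  assumes "integrable M X"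
  shows "variance (\<lambda>x. c - X x) = variance X"
  using assms by (simp add: prob_space power2_commute algebra_simps)

lemma (in prob_space) variance_sum:
  fixes X :: "'i \<Rightarrow> 'a \<Rightarrow> real"
  assumes "finite I"
    and "\<And>i. i \<in> I \<Longrightarrow> integrable M (X i)"
    and "\<And>i j. i \<in> I \<Longrightarrow> j \<in> I \<Longrightarrow> integrable M (\<lambda>x. X i x * X j x)"
  shows "variance (\<lambda>x. \<Sum>i\<in>I. X i x)
    = (\<Sum>i\<in>I. \<Sum>j\<in>I. expectation (\<lambda>x. X i x * X j x) - expectation (X i) * expectation (X j))"
proof -
  have square: "(\<Sum>i\<in>I. X i x)\<^sup>2 = (\<Sum>i\<in>I. \<Sum>j\<in>I. X i x * X j x)" for x
    by (simp add: power2_eq_square sum_product)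
  have "variance (\<lambda>x. \<Sum>i\<in>I. X i x)
      = expectation (\<lambda>x. \<Sum>i\<in>I. \<Sum>j\<in>I. X i x * X j x) - (expectation (\<lambda>x. \<Sum>i\<in>I. X i x))\<^sup>2"
    using assms by (subst variance_eq) (auto simp: square)
  also have "\<dots> = (\<Sum>i\<in>I. \<Sum>j\<in>I. expectation (\<lambda>x. X i x * X j x))
      - (\<Sum>i\<in>I. \<Sum>j\<in>I. expectation (X i) * expectation (X j))"
    using assms by (simp add: power2_eq_square sum_product)
  finally show ?thesis
    by (simp add: sum_subtractf)
qed

lemma real_choose_two: "2 * real (n choose 2) = real n * (real n - 1)"
  by (induction n) (auto simp: numeral_2_eq_2 algebra_simps)

lemma real_choose_three: "6 * real (n choose 3) = real n * (real n - 1) * (real n - 2)"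
proof (induction n)
  case (Suc n)
  have "Suc n choose 3 = (n choose 2) + (n choose 3)"
    by (simp add: numeral_3_eq_3 numeral_2_eq_2)
  then show ?case
    using Suc real_choose_two[of n] by (simp add: algebra_simps)
qed simp

lemma real_choose_two_mult_diff: "real (n choose 2) * real (2 * (n - 2)) = 6 * real (n choose 3)"
proof (cases "n < 2")
  case True
  then show ?thesis
    by simp
next
  case False
  then have "real (n choose 2) * real (2 * (n - 2)) = 2 * real (n choose 2) * (real n - 2)"
    by (simp add: of_nat_diff)
  also have "\<dots> = 6 * real (n choose 3)"
    by (simp only: real_choose_two real_choose_three)
  finally show ?thesis .
qed

lemma choose_two_bounds:
  assumes "3 \<le> n"
  shows "real n ^ 2 / 3 \<le> real (n choose 2)" "real (n choose 2) \<le> real n ^ 2 / 2"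
proof -
  have "real n * (2 / 3 * real n) \<le> real n * (real n - 1)"
    using assms by (intro mult_left_mono) auto
  then show "real n ^ 2 / 3 \<le> real (n choose 2)"
    using real_choose_two[of n] by (simp add: power2_eq_square)
  have "real n * (real n - 1) \<le> real n * real n"
    by (intro mult_left_mono) auto
  then show "real (n choose 2) \<le> real n ^ 2 / 2"
    using real_choose_two[of n] by (simp add: power2_eq_square)
qed

lemma choose_three_bounds:
  assumes "3 \<le> n"
  shows "2 / 9 * real n ^ 3 \<le> 6 * real (n choose 3)" "6 * real (n choose 3) \<le> real n ^ 3"
proof -
  have "real n * (2 / 3 * real n) * (1 / 3 * real n) \<le> real n * (real n - 1) * (real n - 2)"
    using assms by (intro mult_mono) auto
  then show "2 / 9 * real n ^ 3 \<le> 6 * real (n choose 3)"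
    using real_choose_three[of n] by (simp add: power3_eq_cube)
  have "real n * (real n - 1) * (real n - 2) \<le> real n * real n * real n"
    using assms by (intro mult_mono) auto
  then show "6 * real (n choose 3) \<le> real n ^ 3"
    using real_choose_three[of n] by (simp add: power3_eq_cube)
qed

definition vertex_pairs :: "nat \<Rightarrow> (nat \<times> nat) set" where
  "vertex_pairs n = {(i, j). i < j \<and> j < n}"

lemma finite_vertex_pairs [simp]: "finite (vertex_pairs n)"
  by (rule finite_subset[of _ "{..<n} \<times> {..<n}"]) (auto simp: vertex_pairs_def)

lemma card_vertex_pairs: "card (vertex_pairs n) = n choose 2"
proof (induction n)
  case (Suc n)
  have "vertex_pairs (Suc n) = vertex_pairs n \<union> (\<lambda>i. (i, n)) ` {..<n}"
    by (auto simp: vertex_pairs_def)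
  moreover have "vertex_pairs n \<inter> (\<lambda>i. (i, n)) ` {..<n} = {}"
    by (auto simp: vertex_pairs_def)
  ultimately have "card (vertex_pairs (Suc n)) = (n choose 2) + n"
    using Suc by (simp add: card_Un_disjoint card_image inj_on_def)
  then show ?case
    by (simp add: numeral_2_eq_2)
qed (simp add: vertex_pairs_def)

lemma card_vertex_pairs_sharing_one:
  assumes "(i, j) \<in> vertex_pairs n"
  shows "card {f \<in> vertex_pairs n. f \<noteq> (i, j) \<and> (fst f \<in> {i, j} \<or> snd f \<in> {i, j})} = 2 * (n - 2)"
proof -
  let ?sort = "\<lambda>(v, u). (min v u, max v u)"
  have "{f \<in> vertex_pairs n. f \<noteq> (i, j) \<and> (fst f \<in> {i, j} \<or> snd f \<in> {i, j})}
      = ?sort ` (({..<n} - {i, j}) \<times> {i, j})"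
  proof
    show "?sort ` (({..<n} - {i, j}) \<times> {i, j}) \<subseteq> {f \<in> vertex_pairs n. f \<noteq> (i, j) \<and> (fst f \<in> {i, j} \<or> snd f \<in> {i, j})}"
      using assms by (auto simp: vertex_pairs_def min_def max_def split: if_splits)
    show "{f \<in> vertex_pairs n. f \<noteq> (i, j) \<and> (fst f \<in> {i, j} \<or> snd f \<in> {i, j})} \<subseteq> ?sort ` (({..<n} - {i, j}) \<times> {i, j})"
    proof
      fix f
      assume f: "f \<in> {f \<in> vertex_pairs n. f \<noteq> (i, j) \<and> (fst f \<in> {i, j} \<or> snd f \<in> {i, j})}"
      obtain k l where "f = (k, l)"
        by fastforce
      with f have "f = ?sort (l, k) \<and> (l, k) \<in> ({..<n} - {i, j}) \<times> {i, j}
          \<or> f = ?sort (k, l) \<and> (k, l) \<in> ({..<n} - {i, j}) \<times> {i, j}"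
        using assms by (auto simp: vertex_pairs_def)
      then show "f \<in> ?sort ` (({..<n} - {i, j}) \<times> {i, j})"
        by blast
    qed
  qed
  moreover have "inj_on ?sort (({..<n} - {i, j}) \<times> {i, j})"
    by (auto simp: inj_on_def min_def max_def split: if_splits)
  moreover have "card (({..<n} - {i, j}) \<times> {i, j}) = (n - 2) * 2"
    using assms by (simp add: vertex_pairs_def card_cartesian_product card_Diff_subset)
  ultimately show ?thesis
    by (simp add: card_image)
qed

section \<open>The exact variance\<close>

definition non_adj :: "nat \<Rightarrow> (nat \<times> nat \<Rightarrow> bool) \<Rightarrow> nat \<Rightarrow> nat \<Rightarrow> real" where
  "non_adj m w i j = (if rig_adj m w i j then 0 else 1)"

lemma non_adj_eq_prod: "non_adj m w i j = (\<Prod>a<m. if w (i, a) \<and> w (j, a) then 0 else 1)"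
  by (auto simp: non_adj_def rig_adj_def intro!: prod.neutral)

lemma expectation_non_adj_mult:
  assumes "{i, j, k, l} \<subseteq> {..<n}" "i \<noteq> j" "k \<noteq> l" "0 \<le> p" "p \<le> 1"
  shows "measure_pmf.expectation (rig n m p) (\<lambda>w. non_adj m w i j * non_adj m w k l)
    = (1 - 2 * p\<^sup>2 + p ^ card {i, j, k, l}) ^ m"
proof -
  let ?h = "\<lambda>c. (if c i \<and> c j then 0 else 1) * (if c k \<and> c l then 0 else 1) :: real"
  have "measure_pmf.expectation (rig n m p) (\<lambda>w. non_adj m w i j * non_adj m w k l)
      = measure_pmf.expectation (rig n m p) (\<lambda>w. \<Prod>a<m. ?h (\<lambda>x. w (x, a)))"
    by (simp add: non_adj_eq_prod prod.distrib)
  also have "\<dots> = (\<Prod>a<m. measure_pmf.expectation (Pi_pmf {..<n} False (\<lambda>_. bernoulli_pmf p)) ?h)"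
    unfolding rig_def
    by (intro expectation_prod_columns_Pi_pmf measure_pmf.integrable_const_bound[where B = 1]) auto
  also have "\<dots> = (1 - 2 * p\<^sup>2 + p ^ card {i, j, k, l}) ^ m"
    using assms by (simp add: expectation_Pi_bernoulli_not_both)
  finally show ?thesis .
qed

lemma expectation_non_adj:
  assumes "{i, j} \<subseteq> {..<n}" "i \<noteq> j" "0 \<le> p" "p \<le> 1"
  shows "measure_pmf.expectation (rig n m p) (\<lambda>w. non_adj m w i j) = (1 - p\<^sup>2) ^ m"
proof -
  have "(\<lambda>w. non_adj m w i j) = (\<lambda>w. non_adj m w i j * non_adj m w i j)"
    by (auto simp: non_adj_def)
  moreover have "card {i, j, i, j} = 2"
    using assms by (simp add: insert_commute)
  ultimately show ?thesis
    using expectation_non_adj_mult[of i j i j n p m] assms by simp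
qed

lemma real_num_edges_eq:
  "real (num_edges n m w) = real (card (vertex_pairs n)) - (\<Sum>e\<in>vertex_pairs n. non_adj m w (fst e) (snd e))"
proof -
  have "num_edges n m w = card {e \<in> vertex_pairs n. rig_adj m w (fst e) (snd e)}"
    unfolding num_edges_def vertex_pairs_def by (rule arg_cong[where f = card]) auto
  then have "real (num_edges n m w) = (\<Sum>e\<in>{e \<in> vertex_pairs n. rig_adj m w (fst e) (snd e)}. 1)"
    by simp
  also have "\<dots> = (\<Sum>e\<in>vertex_pairs n. if rig_adj m w (fst e) (snd e) then 1 else 0)"
    by (rule sum.inter_filter) simp
  also have "\<dots> = (\<Sum>e\<in>vertex_pairs n. 1 - non_adj m w (fst e) (snd e))"
    by (intro sum.cong) (auto simp: non_adj_def)
  finally show ?thesis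
    by (simp add: sum_subtractf)
qed

lemma sum_vertex_pairs_row:
  fixes p :: real
  assumes "e \<in> vertex_pairs n"
  shows "(\<Sum>f\<in>vertex_pairs n. (1 - 2 * p\<^sup>2 + p ^ card {fst e, snd e, fst f, snd f}) ^ m - ((1 - p\<^sup>2) ^ m)\<^sup>2)
    = ((1 - p\<^sup>2) ^ m - ((1 - p\<^sup>2) ^ m)\<^sup>2) + real (2 * (n - 2)) * ((1 - 2 * p\<^sup>2 + p ^ 3) ^ m - ((1 - p\<^sup>2) ^ m)\<^sup>2)"
proof -
  obtain i j where e: "e = (i, j)"
    by fastforce
  define S where "S = {f \<in> vertex_pairs n. f \<noteq> (i, j) \<and> (fst f \<in> {i, j} \<or> snd f \<in> {i, j})}"
  define g where "g k = (1 - 2 * p\<^sup>2 + p ^ k) ^ m - ((1 - p\<^sup>2) ^ m)\<^sup>2" for k :: nat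
  have "vertex_pairs n \<inter> S = S"
    by (auto simp: S_def)
  have "g 4 = 0"
    by (simp add: g_def power2_eq_square power4_eq_xxxx algebra_simps flip: power_mult_distrib)
  have card_union: "card {i, j, fst f, snd f} = (if f = (i, j) then 2 else if f \<in> S then 3 else 4)"
    if "f \<in> vertex_pairs n" for f
    using assms that by (auto simp: e S_def vertex_pairs_def card_insert_if)
  have "(\<Sum>f\<in>vertex_pairs n. g (card {i, j, fst f, snd f}))
      = (\<Sum>f\<in>vertex_pairs n. (if f = (i, j) then g 2 else 0) + (if f \<in> S then g 3 else 0))"
    using \<open>g 4 = 0\<close> by (intro sum.cong) (auto simp: card_union S_def)
  also have "\<dots> = g 2 + real (card S) * g 3"
    using assms \<open>vertex_pairs n \<inter> S = S\<close> by (simp add: e sum.distrib sum.If_cases)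
  finally show ?thesis
    using card_vertex_pairs_sharing_one assms
    by (simp add: e g_def S_def power2_eq_square)
qed

lemma var_edges_eq_double_sum:
  fixes p :: real
  assumes "0 \<le> p" "p \<le> 1"
  shows "var_edges n m p = (\<Sum>e\<in>vertex_pairs n. \<Sum>f\<in>vertex_pairs n.
    (1 - 2 * p\<^sup>2 + p ^ card {fst e, snd e, fst f, snd f}) ^ m - ((1 - p\<^sup>2) ^ m)\<^sup>2)"
proof -
  let ?M = "rig n m p" and ?P = "vertex_pairs n"
  define Y where "Y e = (\<lambda>w. non_adj m w (fst e) (snd e))" for e
  have integrable: "integrable (measure_pmf ?M) (\<lambda>w. Y e w * Y f w)" "integrable (measure_pmf ?M) (Y e)" for e f
    by (auto simp: Y_def non_adj_def intro!: measure_pmf.integrable_const_bound[where B = 1])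
  have "var_edges n m p = measure_pmf.variance ?M (\<lambda>w. real (card ?P) - (\<Sum>e\<in>?P. Y e w))"
    unfolding var_edges_def real_num_edges_eq Y_def ..
  also have "\<dots> = measure_pmf.variance ?M (\<lambda>w. \<Sum>e\<in>?P. Y e w)"
    by (rule measure_pmf.variance_const_minus) (simp add: integrable)
  also have "\<dots> = (\<Sum>e\<in>?P. \<Sum>f\<in>?P. measure_pmf.expectation ?M (\<lambda>w. Y e w * Y f w)
      - measure_pmf.expectation ?M (Y e) * measure_pmf.expectation ?M (Y f))"
    by (rule measure_pmf.variance_sum) (simp_all add: integrable)
  also have "\<dots> = (\<Sum>e\<in>?P. \<Sum>f\<in>?P.
      (1 - 2 * p\<^sup>2 + p ^ card {fst e, snd e, fst f, snd f}) ^ m - ((1 - p\<^sup>2) ^ m)\<^sup>2)"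
    using assms
    by (intro sum.cong refl)
      (auto simp: Y_def vertex_pairs_def expectation_non_adj expectation_non_adj_mult power2_eq_square)
  finally show ?thesis .
qed

lemma var_edges_eq:
  fixes p :: real
  assumes "0 \<le> p" "p \<le> 1"
  shows "var_edges n m p = real (n choose 2) * p_hat m p * (1 - p_hat m p)
    + 6 * real (n choose 3) * ((1 - 2 * p\<^sup>2 + p ^ 3) ^ m - (1 - p_hat m p)\<^sup>2)"
proof -
  let ?q = "(1 - p\<^sup>2) ^ m"
  have "var_edges n m p
      = (\<Sum>e\<in>vertex_pairs n. (?q - ?q\<^sup>2) + real (2 * (n - 2)) * ((1 - 2 * p\<^sup>2 + p ^ 3) ^ m - ?q\<^sup>2))"
    unfolding var_edges_eq_double_sum[OF assms] by (intro sum.cong refl sum_vertex_pairs_row)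
  also have "\<dots> = real (n choose 2) * (?q - ?q\<^sup>2)
      + (real (n choose 2) * real (2 * (n - 2))) * ((1 - 2 * p\<^sup>2 + p ^ 3) ^ m - ?q\<^sup>2)"
    by (simp add: card_vertex_pairs distrib_left mult.assoc)
  also have "\<dots> = real (n choose 2) * (?q - ?q\<^sup>2)
      + 6 * real (n choose 3) * ((1 - 2 * p\<^sup>2 + p ^ 3) ^ m - ?q\<^sup>2)"
    by (simp only: real_choose_two_mult_diff)
  finally show ?thesis
    by (simp add: p_hat_def power2_eq_square algebra_simps)
qed

section \<open>Order of magnitude\<close>

lemma one_minus_power_le_min:
  fixes x :: real
  assumes "0 \<le> x" "x \<le> 1"
  shows "1 - (1 - x) ^ m \<le> min 1 (real m * x)"
proof -
  have "1 - real m * x \<le> (1 - x) ^ m"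
    using Bernoulli_inequality[of "- x" m] assms by simp
  moreover have "0 \<le> (1 - x) ^ m"
    using assms by simp
  ultimately show ?thesis
    by simp
qed

lemma half_min_le_one_minus_power:
  fixes x :: real
  assumes "0 \<le> x" "x \<le> 1"
  shows "min 1 (real m * x) / 2 \<le> 1 - (1 - x) ^ m"
proof -
  have "(1 - x) ^ m * (1 + real m * x) \<le> (1 - x) ^ m * (1 + x) ^ m"
    using Bernoulli_inequality[of x m] assms by (intro mult_left_mono) auto
  also have "\<dots> = (1 - x\<^sup>2) ^ m"
    by (simp add: power2_eq_square algebra_simps flip: power_mult_distrib)
  also have "\<dots> \<le> 1"
    using assms by (intro power_le_one) (auto simp: power_le_one)
  finally have "(1 - x) ^ m * (1 + real m * x) \<le> 1" .
  then have "real m * x \<le> (1 - (1 - x) ^ m) * (1 + real m * x)"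
    by (simp add: algebra_simps)
  moreover have "min 1 (real m * x) * (1 + real m * x) \<le> 2 * (real m * x)"
  proof (cases "real m * x \<le> 1")
    case True
    then have "real m * x * (1 + real m * x) \<le> real m * x * 2"
      using assms by (intro mult_left_mono) auto
    with True show ?thesis
      by (simp add: min_def mult.commute)
  qed (simp add: min_def mult.commute)
  ultimately have "min 1 (real m * x) * (1 + real m * x) \<le> (2 * (1 - (1 - x) ^ m)) * (1 + real m * x)"
    by (simp only: mult.assoc)
  then have "min 1 (real m * x) \<le> 2 * (1 - (1 - x) ^ m)"
    by (rule mult_right_le_imp_le) (use assms in \<open>simp add: add_pos_nonneg\<close>)
  then show ?thesis
    by simp
qed

lemma one_le_power_one_minus_mult_exp:
  fixes x :: real
  assumes "0 \<le> x" "x \<le> 1 / 2"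
  shows "1 \<le> (1 - x) ^ m * exp (2 * real m * x)"
proof -
  have "0 \<le> x * (1 - 2 * x)"
    using assms by simp
  then have "1 \<le> (1 - x) * (1 + 2 * x)"
    by (simp add: algebra_simps)
  also have "\<dots> \<le> (1 - x) * exp (2 * x)"
    using assms exp_ge_add_one_self[of "2 * x"] by (intro mult_left_mono) auto
  finally have "1 \<le> ((1 - x) * exp (2 * x)) ^ m"
    by (rule one_le_power)
  also have "\<dots> = (1 - x) ^ m * exp (2 * real m * x)"
    by (simp add: power_mult_distrib ac_simps flip: exp_of_nat_mult)
  finally show ?thesis .
qed

text \<open>Two vertex pairs sharing one vertex form a cherry; a single attribute joins neither of them
  with probability 1 - 2p^2 + p^3.\<close>

lemma cherry_factorization:
  fixes p :: real
  assumes "0 < p" "p < 1"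
  obtains x where "0 < 1 - 2 * p\<^sup>2 + p ^ 3" "(1 - p\<^sup>2)\<^sup>2 = (1 - 2 * p\<^sup>2 + p ^ 3) * (1 - x)"
    "4 / 5 * p ^ 3 \<le> x" "x \<le> p ^ 3"
proof
  define a where "a = 1 - 2 * p\<^sup>2 + p ^ 3"
  have a_eq: "a = (1 - p) * (1 + p * (1 - p))"
    by (simp add: a_def power2_eq_square power3_eq_cube algebra_simps)
  have "0 \<le> p * (1 - p)" "p * (1 - p) \<le> 1 / 4"
    using assms mult_const_minus_self_real_le[of p 1] by auto
  then have "(1 - p) * 1 \<le> a" "a \<le> (1 - p) * (5 / 4)"
    using assms unfolding a_eq by (intro mult_left_mono; simp)+
  then have a_lower: "1 - p \<le> a" and a_upper: "a \<le> 5 / 4 * (1 - p)"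
    by simp_all
  then show "0 < 1 - 2 * p\<^sup>2 + p ^ 3"
    using assms by (simp add: a_def)
  then have "0 < a"
    by (simp add: a_def)
  have gap: "a - (1 - p\<^sup>2)\<^sup>2 = p ^ 3 * (1 - p)"
    by (simp add: a_def power2_eq_square power3_eq_cube algebra_simps)
  have "(1 - p\<^sup>2)\<^sup>2 = a * (1 - p ^ 3 * (1 - p) / a)"
    using \<open>0 < a\<close> gap by (simp add: field_simps)
  then show "(1 - p\<^sup>2)\<^sup>2 = (1 - 2 * p\<^sup>2 + p ^ 3) * (1 - p ^ 3 * (1 - p) / a)"
    unfolding a_def .
  have "4 / 5 * p ^ 3 * a \<le> p ^ 3 * (1 - p)"
    using a_upper assms by (simp add: mult_left_mono)
  then show "4 / 5 * p ^ 3 \<le> p ^ 3 * (1 - p) / a"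
    using \<open>0 < a\<close> by (simp add: field_simps)
  have "p ^ 3 * (1 - p) \<le> p ^ 3 * a"
    using a_lower assms by (simp add: mult_left_mono)
  then show "p ^ 3 * (1 - p) / a \<le> p ^ 3"
    using \<open>0 < a\<close> by (simp add: field_simps)
qed

lemma cherry_excess_bounds:
  fixes p :: real
  assumes "0 < p" "p < 1"
  shows "2 / 5 * ((1 - 2 * p\<^sup>2 + p ^ 3) ^ m * min 1 (real m * p ^ 3))
      \<le> (1 - 2 * p\<^sup>2 + p ^ 3) ^ m - ((1 - p\<^sup>2) ^ m)\<^sup>2"
    and "(1 - 2 * p\<^sup>2 + p ^ 3) ^ m - ((1 - p\<^sup>2) ^ m)\<^sup>2
      \<le> (1 - 2 * p\<^sup>2 + p ^ 3) ^ m * min 1 (real m * p ^ 3)"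
proof -
  obtain x where a_pos: "0 < 1 - 2 * p\<^sup>2 + p ^ 3"
    and factor: "(1 - p\<^sup>2)\<^sup>2 = (1 - 2 * p\<^sup>2 + p ^ 3) * (1 - x)"
    and x_bounds: "4 / 5 * p ^ 3 \<le> x" "x \<le> p ^ 3"
    using cherry_factorization[OF assms] .
  have "0 \<le> p ^ 3" "p ^ 3 \<le> 1"
    using assms by (simp_all add: power_le_one)
  then have "0 \<le> x" "x \<le> 1"
    using x_bounds by linarith+
  let ?A = "(1 - 2 * p\<^sup>2 + p ^ 3) ^ m"
  have "((1 - p\<^sup>2) ^ m)\<^sup>2 = ((1 - p\<^sup>2)\<^sup>2) ^ m"
    by (simp only: mult.commute flip: power_mult)
  also have "\<dots> = ?A * (1 - x) ^ m"
    by (simp add: factor power_mult_distrib)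
  finally have excess: "?A - ((1 - p\<^sup>2) ^ m)\<^sup>2 = ?A * (1 - (1 - x) ^ m)"
    by (simp add: algebra_simps)
  have "0 \<le> ?A"
    using a_pos by simp
  have "real m * (4 / 5 * p ^ 3) \<le> real m * x" "real m * x \<le> real m * p ^ 3"
    using x_bounds by (intro mult_left_mono; simp)+
  then have min_lower: "2 / 5 * min 1 (real m * p ^ 3) \<le> min 1 (real m * x) / 2"
    and min_upper: "min 1 (real m * x) \<le> min 1 (real m * p ^ 3)"
    by (auto simp: min_def)
  have "2 / 5 * min 1 (real m * p ^ 3) \<le> 1 - (1 - x) ^ m"
    using half_min_le_one_minus_power[OF \<open>0 \<le> x\<close> \<open>x \<le> 1\<close>, of m] min_lower by linarith
  then have "?A * (2 / 5 * min 1 (real m * p ^ 3)) \<le> ?A * (1 - (1 - x) ^ m)"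
    using \<open>0 \<le> ?A\<close> by (rule mult_left_mono)
  then show "2 / 5 * (?A * min 1 (real m * p ^ 3)) \<le> ?A - ((1 - p\<^sup>2) ^ m)\<^sup>2"
    unfolding excess by (metis mult.left_commute)
  show "?A - ((1 - p\<^sup>2) ^ m)\<^sup>2 \<le> ?A * min 1 (real m * p ^ 3)"
    unfolding excess
    using order_trans[OF one_minus_power_le_min[OF \<open>0 \<le> x\<close> \<open>x \<le> 1\<close>] min_upper] \<open>0 \<le> ?A\<close>
    by (rule mult_left_mono)
qed

lemma cherry_power_le_exp:
  fixes p :: real
  assumes "0 < p" "p < 1" "2 \<le> m" "real m * p ^ 3 \<le> 1"
  shows "(1 - 2 * p\<^sup>2 + p ^ 3) ^ m \<le> exp 2 * ((1 - p\<^sup>2) ^ m)\<^sup>2"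
proof -
  obtain x where a_pos: "0 < 1 - 2 * p\<^sup>2 + p ^ 3"
    and factor: "(1 - p\<^sup>2)\<^sup>2 = (1 - 2 * p\<^sup>2 + p ^ 3) * (1 - x)"
    and x_bounds: "4 / 5 * p ^ 3 \<le> x" "x \<le> p ^ 3"
    using cherry_factorization[OF assms(1,2)] .
  let ?A = "(1 - 2 * p\<^sup>2 + p ^ 3) ^ m"
  have "0 < p ^ 3"
    using assms by simp
  then have "0 \<le> x"
    using x_bounds by linarith
  have "real m * x \<le> real m * p ^ 3"
    using x_bounds by (intro mult_left_mono) auto
  then have "real m * x \<le> 1"
    using assms by linarith
  moreover have "2 * x \<le> real m * x"
    using assms \<open>0 \<le> x\<close> by (intro mult_right_mono) auto
  ultimately have "x \<le> 1 / 2"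
    by linarith
  have "1 \<le> (1 - x) ^ m * exp (2 * real m * x)"
    using \<open>0 \<le> x\<close> \<open>x \<le> 1 / 2\<close> by (rule one_le_power_one_minus_mult_exp)
  also have "\<dots> \<le> (1 - x) ^ m * exp 2"
    using \<open>real m * x \<le> 1\<close> \<open>x \<le> 1 / 2\<close> by (intro mult_left_mono) auto
  finally have "?A \<le> ?A * ((1 - x) ^ m * exp 2)"
    using a_pos by simp
  also have "\<dots> = exp 2 * ((1 - p\<^sup>2)\<^sup>2) ^ m"
    by (simp add: factor power_mult_distrib)
  also have "\<dots> = exp 2 * ((1 - p\<^sup>2) ^ m)\<^sup>2"
    by (simp only: mult.commute flip: power_mult)
  finally show ?thesis .
qed

lemma p_hat_strict_bounds:
  fixes p :: real
  assumes "1 \<le> m" "0 < p" "p < 1"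
  shows "0 < p_hat m p" "p_hat m p < 1"
proof -
  have "0 < p\<^sup>2" "p\<^sup>2 < 1"
    using assms by (simp_all add: power_less_one_iff)
  then have "0 < (1 - p\<^sup>2) ^ m" "(1 - p\<^sup>2) ^ m < 1"
    using assms(1) by (simp_all add: power_less_one_iff[of "1 - p\<^sup>2"])
  then show "0 < p_hat m p" "p_hat m p < 1"
    by (simp_all add: p_hat_def)
qed

lemma var_edges_bounds:
  fixes p :: real
  assumes "3 \<le> n" "1 \<le> m" "0 < p" "p < 1"
  defines "B \<equiv> real n ^ 2 * p_hat m p * (1 - p_hat m p)
    + real n ^ 3 * (1 - 2 * p\<^sup>2 + p ^ 3) ^ m * min 1 (real m * p ^ 3)"
  shows "0 < B" "4 / 45 * B \<le> var_edges n m p" "var_edges n m p \<le> B" "0 < var_edges n m p"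
proof -
  define u where "u = p_hat m p * (1 - p_hat m p)"
  define v where "v = (1 - 2 * p\<^sup>2 + p ^ 3) ^ m * min 1 (real m * p ^ 3)"
  define D where "D = (1 - 2 * p\<^sup>2 + p ^ 3) ^ m - (1 - p_hat m p)\<^sup>2"
  have "0 < u"
    using p_hat_strict_bounds[OF assms(2-4)] by (simp add: u_def)
  have D_bounds: "2 / 5 * v \<le> D" "D \<le> v"
    using cherry_excess_bounds[OF assms(3,4), of m] by (simp_all add: v_def D_def p_hat_def)
  have var: "var_edges n m p = real (n choose 2) * u + 6 * real (n choose 3) * D"
    using assms by (simp add: var_edges_eq u_def D_def mult.assoc)
  have B: "B = real n ^ 2 * u + real n ^ 3 * v"
    by (simp add: B_def u_def v_def mult.assoc)
  have "0 \<le> v"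
    using D_bounds by linarith
  then have "0 < real n ^ 2 * u" "0 \<le> real n ^ 3 * v"
    using \<open>0 < u\<close> assms(1) by simp_all
  then show "0 < B"
    unfolding B by linarith
  have "real n ^ 2 / 3 * u \<le> real (n choose 2) * u"
    using choose_two_bounds(1)[OF assms(1)] \<open>0 < u\<close> by (intro mult_right_mono) auto
  then have "1 / 3 * (real n ^ 2 * u) \<le> real (n choose 2) * u"
    by simp
  moreover have "2 / 9 * real n ^ 3 * (2 / 5 * v) \<le> 6 * real (n choose 3) * D"
    using \<open>0 \<le> v\<close> by (intro mult_mono[OF choose_three_bounds(1)[OF assms(1)] D_bounds(1)]) simp_all
  then have "4 / 45 * (real n ^ 3 * v) \<le> 6 * real (n choose 3) * D"
    by simp
  ultimately show "4 / 45 * B \<le> var_edges n m p"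
    unfolding var B distrib_left using \<open>0 < real n ^ 2 * u\<close> by linarith
  have "real (n choose 2) \<le> real n ^ 2"
    using choose_two_bounds(2)[OF assms(1)] zero_le_power2[of "real n"] by linarith
  then have "real (n choose 2) * u \<le> real n ^ 2 * u"
    using \<open>0 < u\<close> by (simp add: mult_right_mono)
  moreover have "6 * real (n choose 3) * D \<le> real n ^ 3 * v"
    using D_bounds \<open>0 \<le> v\<close>
    by (intro mult_mono[OF choose_three_bounds(2)[OF assms(1)] D_bounds(2)]) simp_all
  ultimately show "var_edges n m p \<le> B"
    unfolding var B by linarith
  with \<open>0 < B\<close> \<open>4 / 45 * B \<le> var_edges n m p\<close> show "0 < var_edges n m p"
    by linarith
qed

lemma var_edges_bounds_sparse:
  fixes p :: real
  assumes "3 \<le> n" "2 \<le> m" "0 < p" "p < 1" "real m * p ^ 3 \<le> 1"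
  defines "B \<equiv> real n ^ 2 * p_hat m p * (1 - p_hat m p) + real n ^ 3 * real m * p ^ 3 * (1 - p_hat m p)\<^sup>2"
  shows "0 < B" "4 / 45 * B \<le> var_edges n m p" "var_edges n m p \<le> exp 2 * B" "0 < var_edges n m p"
proof -
  define B' where "B' = real n ^ 2 * p_hat m p * (1 - p_hat m p)
    + real n ^ 3 * (1 - 2 * p\<^sup>2 + p ^ 3) ^ m * min 1 (real m * p ^ 3)"
  define u where "u = real n ^ 2 * p_hat m p * (1 - p_hat m p)"
  define w where "w = real n ^ 3 * real m * p ^ 3"
  let ?A = "(1 - 2 * p\<^sup>2 + p ^ 3) ^ m" and ?b = "(1 - p_hat m p)\<^sup>2"
  have bounds': "0 < B'" "4 / 45 * B' \<le> var_edges n m p" "var_edges n m p \<le> B'"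
    using var_edges_bounds[OF assms(1) _ assms(3,4)] assms(2) by (simp_all add: B'_def)
  have "0 \<le> w"
    using assms by (simp add: w_def)
  have "0 \<le> ?A * min 1 (real m * p ^ 3)"
    using cherry_excess_bounds[OF assms(3,4), of m] by linarith
  then have "?b \<le> ?A" "?A \<le> exp 2 * ?b"
    using cherry_excess_bounds(1)[OF assms(3,4), of m] cherry_power_le_exp[OF assms(3,4,2,5)]
    by (simp_all add: p_hat_def)
  then have wb: "w * ?b \<le> w * ?A" "w * ?A \<le> exp 2 * (w * ?b)"
    using \<open>0 \<le> w\<close> by (simp_all add: mult_left_mono mult.left_commute)
  have B_eq: "B = u + w * ?b" and B'_eq: "B' = u + w * ?A"
    using assms(5) by (simp_all add: B_def B'_def u_def w_def ac_simps)
  have "0 < u"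
    using p_hat_strict_bounds[of m p] assms by (simp add: u_def)
  have "0 \<le> w * ?b"
    using \<open>0 \<le> w\<close> by simp
  have "u \<le> exp 2 * u"
    using \<open>0 < u\<close> by simp
  have "0 < B" "B \<le> B'" "B' \<le> exp 2 * B"
    unfolding B_eq B'_eq distrib_left using wb \<open>0 < u\<close> \<open>0 \<le> w * ?b\<close> \<open>u \<le> exp 2 * u\<close>
    by linarith+
  with bounds' show "0 < B" "4 / 45 * B \<le> var_edges n m p" "var_edges n m p \<le> exp 2 * B"
      "0 < var_edges n m p"
    by simp_all
qed

theorem lemma3p1:
  shows
  "(\<forall>n m (p::real). n \<ge> 3 \<and> m \<ge> 3 \<and> 0 < p \<and> p < 1 \<longrightarrow>
      var_edges n m p =
        real (n choose 2) * p_hat m p * (1 - p_hat m p)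
        + 6 * real (n choose 3) * ((1 - 2 * p^2 + p^3)^m - (1 - p_hat m p)^2))
   \<and> (\<exists>c C. 0 < c \<and> 0 < C \<and>
      (\<forall>n m (p::real). n \<ge> 3 \<and> m \<ge> 3 \<and> 0 < p \<and> p < 1 \<longrightarrow>
        (let B = real n ^ 2 * p_hat m p * (1 - p_hat m p)
                 + real n ^ 3 * (1 - 2 * p^2 + p^3)^m * min 1 (real m * p^3)
         in 0 < var_edges n m p \<and> 0 < B \<and>
            c * B \<le> var_edges n m p \<and> var_edges n m p \<le> C * B)))
   \<and> (\<exists>c C. 0 < c \<and> 0 < C \<and>
      (\<forall>n m (p::real). n \<ge> 3 \<and> m \<ge> 3 \<and> 0 < p \<and> p < 1 \<and> real m * p^3 \<le> 1 \<longrightarrow>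
        (let B = real n ^ 2 * p_hat m p * (1 - p_hat m p)
                 + real n ^ 3 * real m * p^3 * (1 - p_hat m p)^2
         in 0 < var_edges n m p \<and> 0 < B \<and>
            c * B \<le> var_edges n m p \<and> var_edges n m p \<le> C * B)))"
  apply (intro conjI)
  subgoal
    by (simp add: var_edges_eq)
  subgoal
    by (rule exI[of _ "4 / 45"], rule exI[of _ 1]) (use var_edges_bounds in \<open>simp add: Let_def\<close>)
  subgoal
    by (rule exI[of _ "4 / 45"], rule exI[of _ "exp 2"])
      (use var_edges_bounds_sparse in \<open>simp add: Let_def\<close>)
  done

end
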